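(* Let $M\ge2$ and let $\mathcal{P}$ be a Class II source set on $\{1,\dots,M\}$ with $P_1\ge P_2\ge\dots\ge P_M$ for every $P\in\mathcal{P}$, and let $D^{(M-1)}=\sup_{P\in\mathcal{P}}\sum_{i=2}^{M}P_i$. Then for $D\in(0,1]$, $\epsilon^*_{\mathrm{DP}}(\mathcal{P},D)=0$ if and only if $D\ge D^{(M-1)}$.
   Context: A source set is a nonempty set $\mathcal{P}$ of probability distributions on $\{1,\dots,M\}$; Class I means its convex hull contains the uniform distribution; Class II means it is not Class I and a single permutation orders all its distributions decreasingly. A mechanism is an $M\times M$ row-stochastic matrix $Q$ with entries $Q(j|i)$; its diagonal distortions are $D_i=1-Q(i|i)$. $Q$ is $(\mathcal{P},D)$-valid if $\sum_iP_iD_i\le D$ for all $P\in\mathcal{P}$ (average Hamming distortion); $\mathcal{Q}(\mathcal{P},D)$ is the set of these. $\epsilon_{\mathrm{DP}}(Q)=\min\{\epsilon\ge0:Q(\hat x|x_1)\le e^\epsilon Q(\hat x|x_2)\ \forall x_1,x_2,\hat x\}$ ($+\infty$ if none; all-zero columns allowed), and $\epsilon^*_{\mathrm{DP}}(\mathcal{P},D)=\min_{Q\in\mathcal{Q}(\mathcal{P},D)}\epsilon_{\mathrm{DP}}(Q)$. *)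

theory Defs
  imports "HOL-Analysis.Analysis"
begin

text \<open>Probability distributions on {1..M} are functions nat => real; only the values on
  {1..M} matter. A mechanism Q is a function nat => nat => real with Q x xh = Q(xh|x).\<close>

definition prob_dist :: "nat \<Rightarrow> (nat \<Rightarrow> real) \<Rightarrow> bool" where
  "prob_dist M P \<longleftrightarrow> (\<forall>i\<in>{1..M}. 0 \<le> P i) \<and> (\<Sum>i=1..M. P i) = 1"

definition source_set :: "nat \<Rightarrow> (nat \<Rightarrow> real) set \<Rightarrow> bool" where
  "source_set M \<P> \<longleftrightarrow> \<P> \<noteq> {} \<and> (\<forall>P\<in>\<P>. prob_dist M P)"

text \<open>Class I: the uniform distribution lies in the convex hull of the source set
  (convex hull written out as finite convex combinations, compared on {1..M}).\<close>
definition class_I :: "nat \<Rightarrow> (nat \<Rightarrow> real) set \<Rightarrow> bool" where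
  "class_I M \<P> \<longleftrightarrow> source_set M \<P> \<and>
     (\<exists>S w. finite S \<and> S \<subseteq> \<P> \<and> (\<forall>P\<in>S. 0 \<le> w P) \<and> (\<Sum>P\<in>S. w P) = 1 \<and>
        (\<forall>i\<in>{1..M}. (\<Sum>P\<in>S. w P * P i) = 1 / real M))"

definition class_II :: "nat \<Rightarrow> (nat \<Rightarrow> real) set \<Rightarrow> bool" where
  "class_II M \<P> \<longleftrightarrow> source_set M \<P> \<and> \<not> class_I M \<P> \<and>
     (\<exists>\<sigma>. bij_betw \<sigma> {1..M} {1..M} \<and>
        (\<forall>P\<in>\<P>. \<forall>i j. 1 \<le> i \<and> i \<le> j \<and> j \<le> M \<longrightarrow> P (\<sigma> j) \<le> P (\<sigma> i)))"

definition mechanism :: "nat \<Rightarrow> (nat \<Rightarrow> nat \<Rightarrow> real) \<Rightarrow> bool" where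
  "mechanism M Q \<longleftrightarrow> (\<forall>x\<in>{1..M}. (\<forall>xh\<in>{1..M}. 0 \<le> Q x xh) \<and> (\<Sum>xh=1..M. Q x xh) = 1)"

definition valid_mech :: "nat \<Rightarrow> (nat \<Rightarrow> real) set \<Rightarrow> real \<Rightarrow> (nat \<Rightarrow> nat \<Rightarrow> real) \<Rightarrow> bool" where
  "valid_mech M \<P> D Q \<longleftrightarrow> mechanism M Q \<and>
     (\<forall>P\<in>\<P>. (\<Sum>i=1..M. P i * (1 - Q i i)) \<le> D)"

text \<open>epsilon_DP(Q): least eps >= 0 with Q(xh|x1) <= exp eps * Q(xh|x2); +infinity if none.\<close>
definition eps_DP :: "nat \<Rightarrow> (nat \<Rightarrow> nat \<Rightarrow> real) \<Rightarrow> ereal" where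
  "eps_DP M Q = Inf {ereal e | e. 0 \<le> e \<and>
     (\<forall>x1\<in>{1..M}. \<forall>x2\<in>{1..M}. \<forall>xh\<in>{1..M}. Q x1 xh \<le> exp e * Q x2 xh)}"

definition eps_star :: "nat \<Rightarrow> (nat \<Rightarrow> real) set \<Rightarrow> real \<Rightarrow> ereal" where
  "eps_star M \<P> D = Inf {eps_DP M Q | Q. valid_mech M \<P> D Q}"

end

theory Submission
  imports Defs
begin

text \<open>Take Q with \<epsilon>-DP. For a source P that is largest at 1, DP gives Q(i|i) \<le> exp \<epsilon> * Q(i|1),
  so the expected diagonal mass is at most P 1 * exp \<epsilon>, whereas the distortion constraint forces it to
  be at least 1 - D. Hence \<epsilon> \<ge> ln ((1 - D) / P 1), which is positive as soon as the tail mass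
  1 - P 1 exceeds D. Conversely, if every tail mass is at most D, the mechanism that always
  outputs 1 is valid, and it ignores its input, so it is 0-DP.\<close>

lemma prob_dist_tail_sum:
  assumes "prob_dist M P" and "M \<ge> 1"
  shows "(\<Sum>i=2..M. P i) = 1 - P 1"
proof -
  have "{1..M} = insert 1 {2..M}" using assms(2) by auto
  then have "(\<Sum>i=1..M. P i) = P 1 + (\<Sum>i=2..M. P i)" by simp
  then show ?thesis using assms(1) unfolding prob_dist_def by linarith
qed

lemma prob_dist_max_pos:
  assumes "prob_dist M P" and "M \<ge> 1" and "\<forall>i\<in>{1..M}. P i \<le> P 1"
  shows "0 < P 1"
proof (rule ccontr)
  assume "\<not> 0 < P 1"
  then have "real M * P 1 \<le> 0" by (simp add: mult_nonneg_nonpos)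
  have "1 = (\<Sum>i=1..M. P i)" using assms(1) unfolding prob_dist_def by simp
  also have "\<dots> \<le> (\<Sum>i=1..M. P 1)" using assms(3) by (intro sum_mono) simp
  also have "\<dots> = real M * P 1" by simp
  finally show False using \<open>real M * P 1 \<le> 0\<close> by linarith
qed

lemma eps_DP_nonneg: "0 \<le> eps_DP M Q"
  unfolding eps_DP_def by (rule Inf_greatest) auto

lemma eps_star_nonneg: "0 \<le> eps_star M \<P> D"
  unfolding eps_star_def by (rule Inf_greatest) (auto intro: eps_DP_nonneg)

lemma eps_star_le_eps_DP:
  assumes "valid_mech M \<P> D Q"
  shows "eps_star M \<P> D \<le> eps_DP M Q"
  unfolding eps_star_def using assms by (auto intro: Inf_lower)

lemma eps_DP_geI:
  assumes "\<And>e. 0 \<le> e \<Longrightarrow>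
      \<forall>x1\<in>{1..M}. \<forall>x2\<in>{1..M}. \<forall>xh\<in>{1..M}. Q x1 xh \<le> exp e * Q x2 xh \<Longrightarrow> c \<le> e"
  shows "ereal c \<le> eps_DP M Q"
  unfolding eps_DP_def
proof (rule Inf_greatest, clarify)
  fix e assume "0 \<le> e"
    and "\<forall>x1\<in>{1..M}. \<forall>x2\<in>{1..M}. \<forall>xh\<in>{1..M}. Q x1 xh \<le> exp e * Q x2 xh"
  then show "ereal c \<le> ereal e" using assms by simp
qed

lemma eps_DP_input_independent:
  assumes "\<forall>x\<in>{1..M}. \<forall>xh\<in>{1..M}. Q x xh = q xh"
  shows "eps_DP M Q = 0"
proof (rule antisym)
  have "\<forall>x1\<in>{1..M}. \<forall>x2\<in>{1..M}. \<forall>xh\<in>{1..M}. Q x1 xh \<le> exp 0 * Q x2 xh"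
    using assms by simp
  then have "ereal 0 \<in> {ereal e | e. 0 \<le> e \<and>
      (\<forall>x1\<in>{1..M}. \<forall>x2\<in>{1..M}. \<forall>xh\<in>{1..M}. Q x1 xh \<le> exp e * Q x2 xh)}"
    by blast
  then have "eps_DP M Q \<le> ereal 0" unfolding eps_DP_def by (rule Inf_lower)
  then show "eps_DP M Q \<le> 0" by (simp add: zero_ereal_def)
qed (rule eps_DP_nonneg)

lemma diagonal_mass_le:
  assumes "mechanism M Q" and "M \<ge> 1"
    and P: "\<forall>i\<in>{1..M}. 0 \<le> P i \<and> P i \<le> P 1"
    and DP: "\<forall>x1\<in>{1..M}. \<forall>x2\<in>{1..M}. \<forall>xh\<in>{1..M}. Q x1 xh \<le> exp e * Q x2 xh"
  shows "(\<Sum>i=1..M. P i * Q i i) \<le> P 1 * exp e"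
proof -
  have row1: "\<forall>i\<in>{1..M}. 0 \<le> Q 1 i" "(\<Sum>i=1..M. Q 1 i) = 1"
    using assms(1,2) unfolding mechanism_def by auto
  have "(\<Sum>i=1..M. P i * Q i i) \<le> (\<Sum>i=1..M. P 1 * (exp e * Q 1 i))"
  proof (rule sum_mono)
    fix i assume i: "i \<in> {1..M}"
    have "P i * Q i i \<le> P i * (exp e * Q 1 i)"
      using DP i assms(2) P by (auto intro: mult_left_mono)
    also have "\<dots> \<le> P 1 * (exp e * Q 1 i)"
      using P row1(1) i by (auto intro: mult_right_mono)
    finally show "P i * Q i i \<le> P 1 * (exp e * Q 1 i)" .
  qed
  also have "\<dots> = P 1 * exp e" using row1(2) by (simp add: sum_distrib_left[symmetric])
  finally show ?thesis .
qed

lemma eps_DP_ge_ln_distortion: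
  assumes "mechanism M Q" and "prob_dist M P" and "M \<ge> 1"
    and dec: "\<forall>i\<in>{1..M}. P i \<le> P 1"
    and dist: "(\<Sum>i=1..M. P i * (1 - Q i i)) \<le> D" and "D < 1"
  shows "ereal (ln ((1 - D) / P 1)) \<le> eps_DP M Q"
proof (rule eps_DP_geI)
  fix e assume "0 \<le> e"
    and DP: "\<forall>x1\<in>{1..M}. \<forall>x2\<in>{1..M}. \<forall>xh\<in>{1..M}. Q x1 xh \<le> exp e * Q x2 xh"
  have P1: "0 < P 1" using prob_dist_max_pos assms(2,3) dec .
  have "(\<Sum>i=1..M. P i * (1 - Q i i)) = (\<Sum>i=1..M. P i) - (\<Sum>i=1..M. P i * Q i i)"
    by (simp add: algebra_simps sum_subtractf)
  also have "(\<Sum>i=1..M. P i) = 1" using assms(2) unfolding prob_dist_def by simp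
  finally have "1 - D \<le> P 1 * exp e"
    using diagonal_mass_le[OF assms(1,3) _ DP, of P] assms(2) dec dist
    unfolding prob_dist_def by auto
  then have "(1 - D) / P 1 \<le> exp e" using P1 by (simp add: field_simps)
  then show "ln ((1 - D) / P 1) \<le> e"
    using ln_le_cancel_iff[of "(1 - D) / P 1" "exp e"] P1 \<open>D < 1\<close> by simp
qed

lemma eps_star_ge_ln_distortion:
  assumes "P \<in> \<P>" and "prob_dist M P" and "M \<ge> 1"
    and "\<forall>i\<in>{1..M}. P i \<le> P 1" and "D < 1"
  shows "ereal (ln ((1 - D) / P 1)) \<le> eps_star M \<P> D"
  unfolding eps_star_def
proof (rule Inf_greatest, clarify)
  fix Q assume "valid_mech M \<P> D Q"
  then have "mechanism M Q" and "(\<Sum>i=1..M. P i * (1 - Q i i)) \<le> D"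
    using assms(1) unfolding valid_mech_def by auto
  then show "ereal (ln ((1 - D) / P 1)) \<le> eps_DP M Q"
    using eps_DP_ge_ln_distortion assms(2-5) by blast
qed

lemma valid_mech_constant_output:
  assumes "M \<ge> 1" and "\<forall>P\<in>\<P>. (\<Sum>i=2..M. P i) \<le> D"
  shows "valid_mech M \<P> D (\<lambda>x xh. if xh = 1 then 1 else 0)"
  unfolding valid_mech_def mechanism_def
proof (intro conjI ballI)
  fix x show "(\<Sum>xh=1..M. if xh = 1 then 1 else 0 :: real) = 1"
    using assms(1) by (simp add: sum.delta)
next
  fix P assume "P \<in> \<P>"
  have "{1..M} = insert 1 {2..M}" using assms(1) by auto
  then have "(\<Sum>i=1..M. P i * (1 - (if i = 1 then 1 else 0))) = (\<Sum>i=2..M. P i)"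
    by simp
  then show "(\<Sum>i=1..M. P i * (1 - (if i = 1 then 1 else 0))) \<le> D"
    using assms(2) \<open>P \<in> \<P>\<close> by simp
qed simp

lemma bdd_above_tail_sums:
  assumes "\<forall>P\<in>\<P>. prob_dist M P"
  shows "bdd_above ((\<lambda>P. \<Sum>i=2..M. P i) ` \<P>)"
proof (rule bdd_aboveI2)
  fix P assume "P \<in> \<P>"
  then have "prob_dist M P" using assms by blast
  then have "(\<Sum>i=2..M. P i) \<le> (\<Sum>i=1..M. P i)"
    unfolding prob_dist_def by (intro sum_mono2) auto
  then show "(\<Sum>i=2..M. P i) \<le> 1" using \<open>prob_dist M P\<close> unfolding prob_dist_def by simp
qed

lemma eps_star_pos_if_tail_gt:
  assumes "P \<in> \<P>" and "prob_dist M P" and "M \<ge> 1"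
    and "\<forall>i\<in>{1..M}. P i \<le> P 1" and "D < (\<Sum>i=2..M. P i)"
  shows "0 < eps_star M \<P> D"
proof -
  have "0 < P 1" using prob_dist_max_pos assms(2-4) .
  moreover have "P 1 < 1 - D" using assms(5) prob_dist_tail_sum[OF assms(2,3)] by simp
  ultimately have "0 < ln ((1 - D) / P 1)" by simp
  also have "ereal (ln ((1 - D) / P 1)) \<le> eps_star M \<P> D"
    using eps_star_ge_ln_distortion assms(1-4) \<open>0 < P 1\<close> \<open>P 1 < 1 - D\<close> by simp
  finally show ?thesis by (simp add: zero_ereal_def)
qed

lemma eps_star_eq_0_if_tails_le:
  assumes "M \<ge> 1" and "\<forall>P\<in>\<P>. (\<Sum>i=2..M. P i) \<le> D"
  shows "eps_star M \<P> D = 0"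
proof (rule antisym)
  have "eps_star M \<P> D \<le> eps_DP M (\<lambda>x xh. if xh = 1 then 1 else 0)"
    using assms by (intro eps_star_le_eps_DP valid_mech_constant_output)
  also have "\<dots> = 0"
    by (rule eps_DP_input_independent[where q = "\<lambda>xh. if xh = 1 then 1 else 0"]) simp
  finally show "eps_star M \<P> D \<le> 0" .
qed (rule eps_star_nonneg)

theorem lemma5:
  fixes M :: nat and \<P> :: "(nat \<Rightarrow> real) set" and D :: real
  assumes "M \<ge> 2"
    and "class_II M \<P>"
    and "\<forall>P\<in>\<P>. \<forall>i j. 1 \<le> i \<and> i \<le> j \<and> j \<le> M \<longrightarrow> P j \<le> P i"
    and "0 < D" and "D \<le> 1"
  shows "eps_star M \<P> D = 0 \<longleftrightarrow> D \<ge> (SUP P\<in>\<P>. \<Sum>i=2..M. P i)"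
proof -
  have M1: "M \<ge> 1" using assms(1) by simp
  have ne: "\<P> \<noteq> {}" and pd: "\<forall>P\<in>\<P>. prob_dist M P"
    using assms(2) unfolding class_II_def source_set_def by auto
  have dec: "\<forall>i\<in>{1..M}. P i \<le> P 1" if "P \<in> \<P>" for P using assms(3) that by auto
  have "D \<ge> (SUP P\<in>\<P>. \<Sum>i=2..M. P i) \<longleftrightarrow> (\<forall>P\<in>\<P>. (\<Sum>i=2..M. P i) \<le> D)"
    using cSUP_le_iff[OF ne bdd_above_tail_sums[OF pd]] .
  moreover have "eps_star M \<P> D = 0 \<longleftrightarrow> (\<forall>P\<in>\<P>. (\<Sum>i=2..M. P i) \<le> D)"
  proof
    assume "eps_star M \<P> D = 0"
    then show "\<forall>P\<in>\<P>. (\<Sum>i=2..M. P i) \<le> D"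
      using eps_star_pos_if_tail_gt[OF _ _ M1] pd dec by (metis less_irrefl not_le)
  qed (rule eps_star_eq_0_if_tails_le[OF M1])
  ultimately show ?thesis by simp
qed

end
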